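(* Let $p>3$ be a prime and $t\in\mathbb{Z}_p$. If $1\le k\le p-1$ is an integer, then $$\binom{pt+k-1}{p-1}\binom{-pt-k-1}{p-1}\equiv\frac{p^2t(t+1)}{k^2}\left(1+2pH_k-\frac{p}{k}-\frac{2pt}{k}\right)\pmod{p^4}.$$ If $1\le k\le(p-1)/2$, then $$\binom{pt+k-1}{\frac{p-1}{2}}\binom{-pt-k-1}{\frac{p-1}{2}}\equiv\frac{pt}{k}\left(1-\frac{pt}{k}+2pH_{2k}-pH_k\right)\pmod{p^3}.$$
   Context: $\mathbb{Z}_p$ is the ring of $p$-adic integers; $\binom{x}{m}=x(x-1)\cdots(x-m+1)/m!$ for $x\in\mathbb{Z}_p$. $H_n=\sum_{j=1}^n 1/j$. Congruences modulo $p^m$ mean the difference lies in $p^m\mathbb{Z}_p$. *)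

theory Defs
  imports Complex_Main "HOL-Computational_Algebra.Primes"
begin

text \<open>p-adic integers, represented as coherent sequences of residues:
  t n is the residue of t modulo p^n, in {0..<p^n}, and t (n+1) reduces to t n.\<close>
definition Zp :: "int \<Rightarrow> (nat \<Rightarrow> int) set" where
  "Zp p = {t. \<forall>n. 0 \<le> t n \<and> t n < p ^ n \<and> t (Suc n) mod p ^ n = t n}"

definition qcong :: "int \<Rightarrow> nat \<Rightarrow> rat \<Rightarrow> rat \<Rightarrow> bool" where
  "qcong p m x y \<longleftrightarrow> (\<exists>a b::int. \<not> p dvd b \<and> x - y = of_int (p ^ m) * of_int a / of_int b)"

text \<open>Congruence modulo p^m of two expressions F, G (polynomials in t with p-integral
  rational coefficients) evaluated at the p-adic integer t: the values at the integer
  approximations t n (n \<ge> m), each congruent to t modulo p^m, are congruent mod p^m.\<close>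
definition padic_cong :: "int \<Rightarrow> nat \<Rightarrow> (rat \<Rightarrow> rat) \<Rightarrow> (rat \<Rightarrow> rat) \<Rightarrow> (nat \<Rightarrow> int) \<Rightarrow> bool" where
  "padic_cong p m F G t \<longleftrightarrow> (\<forall>n\<ge>m. qcong p m (F (of_int (t n))) (G (of_int (t n))))"

definition harm :: "nat \<Rightarrow> rat" where
  "harm n = (\<Sum>j=1..n. 1 / of_nat j)"

end

theory Submission
  imports Defs
begin

text \<open>
  The product of the two binomial coefficients factors as p^2 t (t + 1)/k^2, respectively p t/k,
  times a product of factors 1 + p a_i with p-integral a_i. Modulo p^2 such a product is
  1 + p (a_1 + ... + a_n), and the a_i sum to harmonic sums which reduce modulo p by
  H_(p-1) \<equiv> 0 and 1/m + 1/(m-1) + ... + 1/(m-k+1) \<equiv> H_k - 2 H_(2k) for m = (p-1)/2, both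
  obtained by pairing 1/a + 1/b with a + b = p. The prefactor lifts the congruence modulo p^2 to one
  modulo p^4, respectively p^3.
\<close>

lemma (in comm_monoid_set) lessThan_add: "F g {..<m + n} = F g {..<m} \<^bold>* F (\<lambda>i. g (m + i)) {..<n}"
  for g :: "nat \<Rightarrow> 'a"
  by (induction n) (simp_all add: assoc)

lemma prod_falling_eq_rising: "(\<Prod>i<n. c - of_nat i) = (\<Prod>i<n. c - of_nat n + 1 + of_nat i)"
  for c :: "'a::comm_ring_1"
proof -
  have "(\<Prod>i<n. c - of_nat i) = (\<Prod>i<n. c - of_nat (n - Suc i))"
    by (rule prod.nat_diff_reindex[symmetric])
  also have "\<dots> = (\<Prod>i<n. c - of_nat n + 1 + of_nat i)"
    by (rule prod.cong) (auto simp: of_nat_diff)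
  finally show ?thesis .
qed

lemma prod_shifted_eq_mult_prod_ratio:
  "(\<Prod>i<n. y + of_nat (Suc (s + i)))
    = (\<Prod>i<n. of_nat (Suc (s + i))) * (\<Prod>i<n. 1 + y / of_nat (Suc (s + i)))"
  for y :: "'a::field_char_0"
  unfolding prod.distrib[symmetric] by (rule prod.cong) (simp_all add: distrib_left del: of_nat_Suc)

lemma fact_add:
  "fact (a + b) = fact a * (\<Prod>i<b. of_nat (Suc (a + i)) :: 'a::{semiring_char_0, comm_semiring_1})"
  by (induction b) (simp_all add: algebra_simps)

lemma prod_offset_falling_eq:
  fixes y :: "'a::field_char_0"
  assumes "1 \<le> k"
  shows "(\<Prod>i<k. y + of_nat k - 1 - of_nat i) = y * fact (k - 1) * (\<Prod>i<k - 1. 1 + y / of_nat (Suc i))"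
proof -
  obtain k' where k: "k = Suc k'"
    using assms by (cases k) auto
  have "(\<Prod>i<k. y + of_nat k - 1 - of_nat i) = y * (\<Prod>i<k'. y + of_nat (Suc i))"
    unfolding prod_falling_eq_rising k prod.lessThan_Suc_shift by simp
  also have "\<dots> = y * fact k' * (\<Prod>i<k'. 1 + y / of_nat (Suc i))"
    using prod_shifted_eq_mult_prod_ratio[where n = k' and y = y and s = 0]
      fact_add[where a = 0 and b = k' and 'a = 'a] by simp
  finally show ?thesis
    by (simp add: k)
qed

section \<open>p-integral rationals\<close>

definition p_integral :: "int \<Rightarrow> rat set" where
  "p_integral p = {q. \<exists>a b. \<not> p dvd b \<and> q = of_int a / of_int b}"

lemma p_integral_of_int [simp]:
  assumes "prime p"
  shows "of_int a \<in> p_integral p"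
proof -
  have "\<not> p dvd 1"
    using assms not_prime_unit by blast
  then show ?thesis
    unfolding p_integral_def by (intro CollectI exI[of _ a] exI[of _ 1]) simp
qed

lemma p_integral_of_nat [simp]: "prime p \<Longrightarrow> of_nat a \<in> p_integral p"
  using p_integral_of_int[of p "int a"] by simp

lemma p_integral_numeral [simp]: "prime p \<Longrightarrow> numeral a \<in> p_integral p"
  using p_integral_of_int[of p "numeral a"] by simp

lemma p_integral_0 [simp]: "prime p \<Longrightarrow> 0 \<in> p_integral p"
  using p_integral_of_int[of p 0] by simp

lemma p_integral_1 [simp]: "prime p \<Longrightarrow> 1 \<in> p_integral p"
  using p_integral_of_int[of p 1] by simp

lemma p_integral_mult [intro]:
  assumes "prime p" "x \<in> p_integral p" "y \<in> p_integral p"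
  shows "x * y \<in> p_integral p"
proof -
  obtain a b c d where "\<not> p dvd b" "x = of_int a / of_int b" "\<not> p dvd d" "y = of_int c / of_int d"
    using assms(2,3) unfolding p_integral_def by blast
  moreover from this have "\<not> p dvd b * d"
    using assms(1) by (simp add: prime_dvd_mult_iff)
  ultimately show ?thesis
    unfolding p_integral_def by (intro CollectI exI[of _ "a * c"] exI[of _ "b * d"]) simp
qed

lemma p_integral_add [intro]:
  assumes "prime p" "x \<in> p_integral p" "y \<in> p_integral p"
  shows "x + y \<in> p_integral p"
proof -
  obtain a b c d where "\<not> p dvd b" "x = of_int a / of_int b" "\<not> p dvd d" "y = of_int c / of_int d"
    using assms(2,3) unfolding p_integral_def by blast
  moreover from this have "\<not> p dvd b * d" "b \<noteq> 0" "d \<noteq> 0"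
    using assms(1) by (auto simp: prime_dvd_mult_iff)
  ultimately show ?thesis
    unfolding p_integral_def
    by (intro CollectI exI[of _ "a * d + c * b"] exI[of _ "b * d"]) (simp add: field_simps)
qed

lemma p_integral_uminus [intro]:
  assumes "x \<in> p_integral p"
  shows "- x \<in> p_integral p"
proof -
  obtain a b where "\<not> p dvd b" "x = of_int a / of_int b"
    using assms unfolding p_integral_def by blast
  then show ?thesis
    unfolding p_integral_def by (intro CollectI exI[of _ "- a"] exI[of _ b]) simp
qed

lemma p_integral_diff [intro]:
  "prime p \<Longrightarrow> x \<in> p_integral p \<Longrightarrow> y \<in> p_integral p \<Longrightarrow> x - y \<in> p_integral p"
  using p_integral_add[of p x "- y"] by auto

lemma p_integral_divide_of_nat [intro]:
  assumes "prime p" "x \<in> p_integral p" "0 < b" "int b < p"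
  shows "x / of_nat b \<in> p_integral p"
proof -
  have "\<not> p dvd int b"
    using assms(3,4) zdvd_not_zless by auto
  then have "1 / of_nat b \<in> p_integral p"
    unfolding p_integral_def by (intro CollectI exI[of _ 1] exI[of _ "int b"]) simp
  then show ?thesis
    using p_integral_mult[OF assms(1,2)] by (simp add: divide_inverse)
qed

lemma p_integral_sum [intro]:
  "prime p \<Longrightarrow> (\<And>i. i \<in> I \<Longrightarrow> f i \<in> p_integral p) \<Longrightarrow> sum f I \<in> p_integral p"
  by (induction I rule: infinite_finite_induct) auto

lemma qcong_iff_p_integral:
  "qcong p m x y \<longleftrightarrow> (\<exists>r\<in>p_integral p. x - y = of_int p ^ m * r)"
proof
  assume "qcong p m x y"
  then obtain a b where "\<not> p dvd b" "x - y = of_int p ^ m * (of_int a / of_int b)"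
    unfolding qcong_def by auto
  then show "\<exists>r\<in>p_integral p. x - y = of_int p ^ m * r"
    unfolding p_integral_def by blast
next
  assume "\<exists>r\<in>p_integral p. x - y = of_int p ^ m * r"
  then obtain a b where "\<not> p dvd b" "x - y = of_int p ^ m * (of_int a / of_int b)"
    unfolding p_integral_def by blast
  then show "qcong p m x y"
    unfolding qcong_def by (intro exI[of _ a] exI[of _ b]) simp
qed

section \<open>Congruences modulo prime powers\<close>

lemma qcong_mult_prime_power:
  "qcong (int p) m x y \<Longrightarrow> qcong (int p) (j + m) (of_nat p ^ j * x) (of_nat p ^ j * y)"
  by (auto simp: qcong_iff_p_integral power_add algebra_simps)

lemma qcong_add_prime_power_multiple:
  "r \<in> p_integral (int p) \<Longrightarrow> qcong (int p) m (x + of_nat p ^ m * r) x"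
  by (auto simp: qcong_iff_p_integral)

context
  fixes p :: nat
  assumes prime: "prime (int p)"
begin

lemma qcong_refl [intro]: "qcong (int p) m x x"
  using prime by (auto simp: qcong_iff_p_integral intro: bexI[of _ 0])

lemma qcong_trans [trans]:
  "qcong (int p) m x y \<Longrightarrow> qcong (int p) m y z \<Longrightarrow> qcong (int p) m x z"
  using prime by (auto simp: qcong_iff_p_integral algebra_simps intro!: bexI[of _ "r + s" for r s])

lemma qcong_add:
  "qcong (int p) m x x' \<Longrightarrow> qcong (int p) m y y' \<Longrightarrow> qcong (int p) m (x + y) (x' + y')"
  using prime by (auto simp: qcong_iff_p_integral algebra_simps intro!: bexI[of _ "r + s" for r s])

lemma qcong_sum:
  "(\<And>i. i \<in> I \<Longrightarrow> qcong (int p) m (f i) (g i)) \<Longrightarrow> qcong (int p) m (sum f I) (sum g I)"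
  by (induction I rule: infinite_finite_induct) (auto intro: qcong_add)

lemma qcong_mult_left:
  "c \<in> p_integral (int p) \<Longrightarrow> qcong (int p) m x y \<Longrightarrow> qcong (int p) m (c * x) (c * y)"
  using prime by (auto simp: qcong_iff_p_integral algebra_simps intro!: bexI[of _ "c * r" for r])

lemma p_integral_qcong:
  assumes "qcong (int p) m x y" "y \<in> p_integral (int p)"
  shows "x \<in> p_integral (int p)"
proof -
  obtain r where "r \<in> p_integral (int p)" "x = y + of_nat (p ^ m) * r"
    using assms(1) by (auto simp: qcong_iff_p_integral eq_diff_eq)
  then show ?thesis
    using prime assms(2) by (simp del: of_nat_power add: p_integral_add p_integral_mult)
qed

lemma qcong_mult:
  assumes "qcong (int p) m x x'" "qcong (int p) m y y'" "x \<in> p_integral (int p)" "y' \<in> p_integral (int p)"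
  shows "qcong (int p) m (x * y) (x' * y')"
proof -
  obtain r s where "r \<in> p_integral (int p)" "x - x' = of_nat p ^ m * r"
    "s \<in> p_integral (int p)" "y - y' = of_nat p ^ m * s"
    using assms(1,2) by (auto simp: qcong_iff_p_integral)
  moreover have "x * y - x' * y' = x * (y - y') + (x - x') * y'"
    by (simp add: algebra_simps)
  ultimately have "x * y - x' * y' = of_nat p ^ m * (x * s + r * y')"
    by (simp add: algebra_simps)
  moreover have "x * s + r * y' \<in> p_integral (int p)"
    using prime assms(3,4) \<open>r \<in> p_integral (int p)\<close> \<open>s \<in> p_integral (int p)\<close>
    by (intro p_integral_add p_integral_mult)
  ultimately show ?thesis
    unfolding qcong_iff_p_integral of_int_of_nat_eq by blast
qed

lemma qcong_near_one_mult:
  assumes x: "qcong (int p) 2 x (1 + of_nat p * a)" and y: "qcong (int p) 2 y (1 + of_nat p * b)"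
    and a: "a \<in> p_integral (int p)" and b: "b \<in> p_integral (int p)"
  shows "qcong (int p) 2 (x * y) (1 + of_nat p * (a + b))"
proof -
  have near_one: "1 + of_nat p * c \<in> p_integral (int p)" if "c \<in> p_integral (int p)" for c
    using prime that by (intro p_integral_add p_integral_mult) simp_all
  have "qcong (int p) 2 (x * y) ((1 + of_nat p * a) * (1 + of_nat p * b))"
    using x y p_integral_qcong[OF x near_one[OF a]] near_one[OF b] by (rule qcong_mult)
  also have "(1 + of_nat p * a) * (1 + of_nat p * b) = 1 + of_nat p * (a + b) + of_nat p ^ 2 * (a * b)"
    by (simp add: algebra_simps power2_eq_square)
  also have "qcong (int p) 2 \<dots> (1 + of_nat p * (a + b))"
    using prime a b by (intro qcong_add_prime_power_multiple p_integral_mult)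
  finally show ?thesis .
qed

lemma qcong_near_one_prod:
  assumes "finite I" "\<And>i. i \<in> I \<Longrightarrow> a i \<in> p_integral (int p)"
  shows "qcong (int p) 2 (\<Prod>i\<in>I. 1 + of_nat p * a i) (1 + of_nat p * (\<Sum>i\<in>I. a i))"
  using assms
proof (induction I rule: finite_induct)
  case (insert j I)
  have "qcong (int p) 2 ((1 + of_nat p * a j) * (\<Prod>i\<in>I. 1 + of_nat p * a i))
      (1 + of_nat p * (a j + (\<Sum>i\<in>I. a i)))"
    using prime insert by (intro qcong_near_one_mult qcong_refl p_integral_sum) auto
  then show ?case
    using insert.hyps by simp
qed (simp add: qcong_refl)

lemma qcong_near_one_scaled:
  assumes c: "c \<in> p_integral (int p)"
    and x: "qcong (int p) 2 x (1 + of_nat p * s)" and s: "qcong (int p) 1 s s'"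
  shows "qcong (int p) (j + 2) (of_nat p ^ j * c * x) (of_nat p ^ j * c * (1 + of_nat p * s'))"
proof -
  have "qcong (int p) (j + 2) (of_nat p ^ j * (c * x)) (of_nat p ^ j * (c * (1 + of_nat p * s)))"
    by (intro qcong_mult_prime_power qcong_mult_left c x)
  also have "of_nat p ^ j * (c * (1 + of_nat p * s)) = of_nat p ^ j * c + of_nat p ^ Suc j * (c * s)"
    by (simp add: algebra_simps)
  also have "qcong (int p) (j + 2) \<dots> (of_nat p ^ j * c + of_nat p ^ Suc j * (c * s'))"
    using qcong_mult_prime_power[OF qcong_mult_left[OF c s], of "Suc j"]
    by (intro qcong_add qcong_refl) simp
  also have "of_nat p ^ j * c + of_nat p ^ Suc j * (c * s') = of_nat p ^ j * c * (1 + of_nat p * s')"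
    by (simp add: algebra_simps)
  finally show ?thesis
    by (simp add: mult.assoc)
qed

lemma qcong_reciprocals_complementary:
  assumes "0 < a" "0 < b" "a + b = p"
  shows "qcong (int p) 1 (1 / of_nat a + 1 / of_nat b) 0"
proof -
  have "1 / of_nat a + 1 / of_nat b - 0 = of_nat p ^ 1 * (1 / of_nat a / of_nat b :: rat)"
    using assms(1,2) unfolding assms(3)[symmetric] by (simp add: field_simps)
  moreover have "1 / of_nat a / of_nat b \<in> p_integral (int p)"
    using prime assms by (intro p_integral_divide_of_nat) auto
  ultimately show ?thesis
    unfolding qcong_iff_p_integral of_int_of_nat_eq by blast
qed

end

section \<open>Harmonic sums\<close>

lemma harm_lessThan: "harm n = (\<Sum>i<n. 1 / of_nat (Suc i))"
  unfolding harm_def by (simp add: sum.atLeast1_atMost_eq)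

lemma harm_Suc: "harm (Suc n) = harm n + 1 / of_nat (Suc n)"
  by (simp add: harm_lessThan)

lemma sum_divide_Suc_eq_harm: "(\<Sum>i<n. c / of_nat (Suc i)) = c * harm n"
  by (simp add: harm_lessThan sum_distrib_left)

lemma sum_divide_Suc_add_eq_harm_diff:
  assumes "k \<le> n"
  shows "(\<Sum>i<n - k. c / of_nat (Suc (k + i))) = c * (harm n - harm k)"
proof -
  have "c * harm n = (\<Sum>i<k + (n - k). c / of_nat (Suc i))"
    using assms by (simp only: le_add_diff_inverse sum_divide_Suc_eq_harm)
  also have "\<dots> = c * harm k + (\<Sum>i<n - k. c / of_nat (Suc (k + i)))"
    unfolding sum.lessThan_add by (simp only: sum_divide_Suc_eq_harm)
  finally show ?thesis
    by (simp add: algebra_simps)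
qed

lemma harm_pred: "0 < k \<Longrightarrow> harm (k - 1) = harm k - 1 / of_nat k"
  using harm_Suc[of "k - 1"] by simp

lemma sum_reciprocals_reversed:
  assumes "k \<le> m"
  shows "(\<Sum>i<k. 1 / of_nat (m - i)) = harm m - harm (m - k)"
proof -
  have "(\<Sum>i<k. 1 / of_nat (m - i)) = (\<Sum>i<k. 1 / of_nat (Suc (m - k + (k - Suc i))) :: rat)"
    by (rule sum.cong) (use assms in auto)
  also have "\<dots> = (\<Sum>i<k. 1 / of_nat (Suc (m - k + i)))"
    by (rule sum.nat_diff_reindex)
  also have "\<dots> = harm m - harm (m - k)"
    using sum_divide_Suc_add_eq_harm_diff[of "m - k" m 1] assms by simp
  finally show ?thesis .
qed

lemma harm_double_minus_harm: "2 * harm (2 * k) - harm k = (\<Sum>i<k. 2 / of_nat (2 * i + 1))"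
proof (induction k)
  case (Suc k)
  have "harm (2 * Suc k) = harm (2 * k) + 1 / of_nat (2 * k + 1) + 1 / of_nat (2 * k + 2)"
    by (simp add: harm_Suc)
  moreover have "2 * (1 / of_nat (2 * k + 2)) = (1 / of_nat (Suc k) :: rat)"
    by (simp add: field_simps)
  ultimately show ?case
    using Suc.IH by (simp add: harm_Suc algebra_simps)
qed (simp add: harm_def)

text \<open>Both sums below vanish mod p because their terms pair up as 1/a + 1/b with a + b = p.\<close>

lemma qcong_harm_prime_minus_one:
  assumes "prime p" "p > 2"
  shows "qcong (int p) 1 (harm (p - 1)) 0"
proof -
  have prime: "prime (int p)"
    using assms(1) by simp
  have "2 * harm (p - 1) = (\<Sum>i<p - 1. 1 / of_nat (Suc i) + 1 / of_nat (p - 1 - i))"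
    unfolding harm_lessThan mult_2 sum.distrib
    by (subst (2) sum.nat_diff_reindex[symmetric]) (simp add: Suc_diff_Suc)
  also have "qcong (int p) 1 \<dots> (\<Sum>i<p - 1. 0)"
    using prime by (intro qcong_sum qcong_reciprocals_complementary) auto
  finally have "qcong (int p) 1 (1 / 2 * (2 * harm (p - 1))) (1 / 2 * 0)"
    using prime assms(2) p_integral_divide_of_nat[OF prime p_integral_1, of 2]
    by (intro qcong_mult_left) auto
  then show ?thesis
    by simp
qed

lemma qcong_sum_reciprocals_reversed_harm:
  assumes "prime p" "p = 2 * m + 1" "k \<le> m"
  shows "qcong (int p) 1 ((\<Sum>i<k. 1 / of_nat (m - i)) + (2 * harm (2 * k) - harm k)) 0"
proof -
  have prime: "prime (int p)"
    using assms(1) by simp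
  have "(\<Sum>i<k. 1 / of_nat (m - i)) + (2 * harm (2 * k) - harm k)
      = (\<Sum>i<k. 2 * (1 / of_nat (2 * (m - i)) + 1 / of_nat (2 * i + 1)))"
    unfolding harm_double_minus_harm sum.distrib[symmetric]
    by (rule sum.cong) (simp_all add: distrib_left)
  also have "qcong (int p) 1 \<dots> (\<Sum>i<k. 2 * 0)"
    using prime assms(2,3) by (intro qcong_sum qcong_mult_left qcong_reciprocals_complementary) auto
  finally show ?thesis
    by simp
qed

section \<open>Factorizations of binomial coefficients\<close>

lemma gbinomial_offset_eq_prod:
  fixes y :: rat
  assumes "1 \<le> k" "k \<le> n"
  shows "(y + of_nat k - 1) gchoose n = y / of_nat k * (\<Prod>i<k - 1. 1 + y / of_nat (Suc i))
          * (\<Prod>i<n - k. 1 + (y - of_nat (Suc n)) / of_nat (Suc (k + i)))"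
proof -
  define M where "M = n - k"
  have n: "n = k + M"
    using assms unfolding M_def by simp
  define a where "a = y + of_nat k - 1"
  define D where "D = (\<Prod>i<M. of_nat (Suc (k + i)) :: rat)"
  define R1 where "R1 = (\<Prod>i<k - 1. 1 + y / of_nat (Suc i))"
  define R2 where "R2 = (\<Prod>i<M. 1 + (y - of_nat (Suc n)) / of_nat (Suc (k + i)))"
  have "(\<Prod>i<n. a - of_nat i) = (\<Prod>i<k. a - of_nat i) * (\<Prod>i<M. a - of_nat k - of_nat i)"
    unfolding n prod.lessThan_add by (simp add: algebra_simps)
  also have "(\<Prod>i<k. a - of_nat i) = y * fact (k - 1) * R1"
    unfolding a_def R1_def by (rule prod_offset_falling_eq[OF assms(1)])
  also have "(\<Prod>i<M. a - of_nat k - of_nat i) = D * R2"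
    unfolding prod_falling_eq_rising D_def R2_def prod_shifted_eq_mult_prod_ratio[symmetric]
    by (rule prod.cong) (simp_all add: a_def n)
  finally have num: "(\<Prod>i<n. a - of_nat i) = y * fact (k - 1) * R1 * (D * R2)" .
  have fact_n: "fact n = of_nat k * fact (k - 1) * D"
    unfolding n fact_add D_def using assms(1) by (simp add: fact_reduce)
  have "D \<noteq> 0"
    by (simp add: D_def)
  then have "a gchoose n = y / of_nat k * R1 * R2"
    unfolding gbinomial_prod_rev atLeast0LessThan num fact_n by simp
  then show ?thesis
    by (simp add: a_def R1_def R2_def M_def)
qed

lemma binomial_mult_gbinomial_offset:
  fixes y :: rat
  assumes "1 \<le> k" "k \<le> m"
  shows "of_nat (m choose k) * ((y + of_nat k - 1) gchoose m) = (-1) ^ (m - k) * (y / of_nat k)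
          * (\<Prod>i<k - 1. 1 + y / of_nat (Suc i)) * (\<Prod>i<m - k. 1 - y / of_nat (Suc i))"
proof -
  define M where "M = m - k"
  have m: "m = k + M"
    using assms unfolding M_def by simp
  define a where "a = y + of_nat k - 1"
  define R1 where "R1 = (\<Prod>i<k - 1. 1 + y / of_nat (Suc i))"
  define R2 where "R2 = (\<Prod>i<M. 1 - y / of_nat (Suc i))"
  have "(\<Prod>i<m. a - of_nat i) = (\<Prod>i<k. a - of_nat i) * (\<Prod>i<M. a - of_nat k - of_nat i)"
    unfolding m prod.lessThan_add by (simp add: algebra_simps)
  also have "(\<Prod>i<k. a - of_nat i) = y * fact (k - 1) * R1"
    unfolding a_def R1_def by (rule prod_offset_falling_eq[OF assms(1)])
  also have "(\<Prod>i<M. a - of_nat k - of_nat i) = (\<Prod>i<M. - 1 * (- y + of_nat (Suc i)))"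
    by (rule prod.cong) (simp_all add: a_def)
  also have "\<dots> = (-1) ^ M * (fact M * R2)"
    using prod_shifted_eq_mult_prod_ratio[where n = M and y = "- y" and s = 0]
      fact_add[where a = 0 and b = M and 'a = rat] unfolding prod.distrib by (simp add: R2_def)
  finally have num: "(\<Prod>i<m. a - of_nat i) = y * fact (k - 1) * R1 * ((-1) ^ M * (fact M * R2))" .
  have "of_nat (m choose k) = (fact m / (of_nat k * fact (k - 1) * fact M) :: rat)"
    using assms by (simp add: binomial_fact M_def fact_reduce)
  then have "of_nat (m choose k) * (a gchoose m) = (-1) ^ M * (y / of_nat k) * R1 * R2"
    unfolding gbinomial_prod_rev atLeast0LessThan num using assms(1) by simp
  then show ?thesis
    by (simp add: a_def R1_def R2_def M_def)
qed

lemma gbinomial_negated_offset: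
  fixes y :: rat
  assumes "k \<le> m"
  shows "(- y - of_nat k - 1) gchoose m = (-1) ^ (m + k) * of_nat (m choose k)
          * (\<Prod>i<m - k. 1 + y / of_nat (Suc (k + i)))
          * (\<Prod>i<k. 1 - (y + of_nat (2 * m + 1)) / of_nat (m - i))"
proof -
  define M where "M = m - k"
  have m: "m = k + M"
    using assms unfolding M_def by simp
  define c where "c = y + of_nat k + of_nat m"
  define T where "T = (\<Prod>i<k. of_nat (m - i) :: rat)"
  define D where "D = (\<Prod>i<M. of_nat (Suc (k + i)) :: rat)"
  define R1 where "R1 = (\<Prod>i<k. 1 - (y + of_nat (2 * m + 1)) / of_nat (m - i))"
  define R2 where "R2 = (\<Prod>i<M. 1 + y / of_nat (Suc (k + i)))"
  have "(\<Prod>i<m. c - of_nat i) = (\<Prod>i<k. c - of_nat i) * (\<Prod>i<M. c - of_nat k - of_nat i)"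
    unfolding m prod.lessThan_add by (simp add: algebra_simps)
  also have "(\<Prod>i<k. c - of_nat i)
      = (\<Prod>i<k. - 1 * (of_nat (m - i) * (1 - (y + of_nat (2 * m + 1)) / of_nat (m - i))))"
    unfolding prod_falling_eq_rising
    by (rule prod.cong) (use assms in \<open>auto simp: c_def field_simps of_nat_diff\<close>)
  also have "\<dots> = (-1) ^ k * T * R1"
    unfolding prod.distrib by (simp add: T_def R1_def)
  also have "(\<Prod>i<M. c - of_nat k - of_nat i) = D * R2"
    unfolding prod_falling_eq_rising D_def R2_def prod_shifted_eq_mult_prod_ratio[symmetric]
    by (rule prod.cong) (simp_all add: c_def m)
  finally have num: "(\<Prod>i<m. c - of_nat i) = (-1) ^ k * T * R1 * (D * R2)" .
  have "fact m = fact k * D"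
    unfolding m fact_add D_def ..
  moreover have "fact m = fact M * T"
  proof -
    have "T = (\<Prod>i<k. of_nat (Suc (M + i)))"
      unfolding T_def by (subst prod.nat_diff_reindex[symmetric]) (rule prod.cong, auto simp: m)
    then show ?thesis
      using fact_add[of M k] m by (simp add: add.commute)
  qed
  ultimately have "of_nat (m choose k) = T * D / fact m"
    using assms by (simp add: binomial_fact M_def field_simps)
  moreover have "(- y - of_nat k - 1) gchoose m = (-1) ^ m * (c gchoose m)"
    by (subst gbinomial_negated_upper) (simp add: c_def algebra_simps)
  ultimately show ?thesis
    unfolding gbinomial_prod_rev atLeast0LessThan num
    by (simp add: R1_def R2_def M_def power_add)
qed

lemma gbinomial_product_even_eq_prod:
  fixes y :: rat
  assumes "even n" "1 \<le> k" "k \<le> n"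
  shows "((y + of_nat k - 1) gchoose n) * ((- y - of_nat k - 1) gchoose n)
     = y * (y + of_nat (Suc n)) / of_nat k ^ 2
       * ((\<Prod>i<k - 1. 1 + y / of_nat (Suc i))
          * (\<Prod>i<n - k. 1 + (y - of_nat (Suc n)) / of_nat (Suc (k + i))))
       * ((\<Prod>i<k - 1. 1 + (y + of_nat (Suc n)) / of_nat (Suc i))
          * (\<Prod>i<n - k. 1 + y / of_nat (Suc (k + i))))"
proof -
  have "(- y - of_nat k - 1) gchoose n = ((y + of_nat (Suc n)) + of_nat k - 1) gchoose n"
    using gbinomial_negated_upper[of "- y - of_nat k - 1" n] assms(1) by (simp add: algebra_simps)
  then show ?thesis
    unfolding gbinomial_offset_eq_prod[OF assms(2,3)] by (simp add: power2_eq_square)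
qed

lemma gbinomial_product_eq_prod:
  fixes y :: rat
  assumes "1 \<le> k" "k \<le> m"
  shows "((y + of_nat k - 1) gchoose m) * ((- y - of_nat k - 1) gchoose m)
     = y / of_nat k
       * ((\<Prod>i<k - 1. 1 + y / of_nat (Suc i)) * (\<Prod>i<m - k. 1 + y / of_nat (Suc (k + i))))
       * ((\<Prod>i<m - k. 1 - y / of_nat (Suc i))
          * (\<Prod>i<k. 1 - (y + of_nat (2 * m + 1)) / of_nat (m - i)))"
proof -
  define U where
    "U = y / of_nat k * (\<Prod>i<k - 1. 1 + y / of_nat (Suc i)) * (\<Prod>i<m - k. 1 - y / of_nat (Suc i))"
  define V where "V = (\<Prod>i<m - k. 1 + y / of_nat (Suc (k + i)))
      * (\<Prod>i<k. 1 - (y + of_nat (2 * m + 1)) / of_nat (m - i))"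
  define B where "B = (of_nat (m choose k) :: rat)"
  define f where "f = (y + of_nat k - 1) gchoose m"
  define g where "g = (- y - of_nat k - 1) gchoose m"
  have "B * (f * g) = (B * f) * g"
    by (simp only: mult.assoc)
  also have "\<dots> = ((-1) ^ (m - k) * U) * ((-1) ^ (m + k) * B * V)"
    using binomial_mult_gbinomial_offset[OF assms, of y] gbinomial_negated_offset[OF assms(2), of y]
    unfolding B_def f_def g_def U_def V_def by (simp only: mult.assoc)
  also have "\<dots> = ((-1) ^ (m - k) * (-1) ^ (m + k)) * B * (U * V)"
    by (simp only: ac_simps)
  also have "(-1) ^ (m - k) * (-1) ^ (m + k) = (1 :: rat)"
    using assms(2) by (simp flip: power_add)
  finally have "f * g = U * V"
    using assms(2) by (simp add: B_def)
  then show ?thesis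
    unfolding f_def g_def U_def V_def by (simp only: ac_simps)
qed

lemma qcong_gbinomial_product_full:
  fixes X :: rat
  assumes p: "prime p" "p > 3" and k: "1 \<le> k" "k \<le> p - 1" and X: "X \<in> p_integral (int p)"
  shows "qcong (int p) 4
     (((of_nat p * X + of_nat k - 1) gchoose (p - 1)) * ((- of_nat p * X - of_nat k - 1) gchoose (p - 1)))
     (of_nat p ^ 2 * X * (X + 1) / of_nat k ^ 2 *
        (1 + 2 * of_nat p * harm k - of_nat p / of_nat k - 2 * of_nat p * X / of_nat k))"
proof -
  have prime: "prime (int p)"
    using p(1) by simp
  note qcong_trans[OF prime, trans]
  define n where "n = p - 1"
  have n: "Suc n = p" "even n" "k \<le> n"
    using p k prime_odd_nat[OF p(1)] unfolding n_def by auto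
  define \<Pi> where "\<Pi> =
      ((\<Prod>i<k - 1. 1 + of_nat p * (X / of_nat (Suc i)))
        * (\<Prod>i<n - k. 1 + of_nat p * ((X - 1) / of_nat (Suc (k + i)))))
    * ((\<Prod>i<k - 1. 1 + of_nat p * ((X + 1) / of_nat (Suc i)))
        * (\<Prod>i<n - k. 1 + of_nat p * (X / of_nat (Suc (k + i)))))"
  define S where "S =
      ((\<Sum>i<k - 1. X / of_nat (Suc i)) + (\<Sum>i<n - k. (X - 1) / of_nat (Suc (k + i))))
    + ((\<Sum>i<k - 1. (X + 1) / of_nat (Suc i)) + (\<Sum>i<n - k. X / of_nat (Suc (k + i))))"
  define c where "c = X * (X + 1) / of_nat k / of_nat k"
  have c: "c \<in> p_integral (int p)"
    unfolding c_def using prime X k n by (intro p_integral_divide_of_nat p_integral_mult p_integral_add; simp)+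
  have \<Pi>_cong: "qcong (int p) 2 \<Pi> (1 + of_nat p * S)"
    unfolding \<Pi>_def S_def using n
    by (intro qcong_near_one_mult qcong_near_one_prod p_integral_add p_integral_diff p_integral_sum
        p_integral_divide_of_nat prime finite_lessThan X p_integral_1) auto
  have harm_n: "qcong (int p) 1 (harm n) 0"
    using qcong_harm_prime_minus_one[OF p(1)] p(2) unfolding n_def by simp
  have "S = 2 * harm k - (2 * X + 1) / of_nat k + (2 * X - 1) * harm n"
    unfolding S_def sum_divide_Suc_eq_harm sum_divide_Suc_add_eq_harm_diff[OF n(3)]
      harm_pred[OF k(1)[unfolded One_nat_def Suc_le_eq]]
    by (simp add: algebra_simps add_divide_distrib)
  also have "qcong (int p) 1 \<dots> (2 * harm k - (2 * X + 1) / of_nat k + (2 * X - 1) * 0)"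
    using harm_n prime X by (intro qcong_add qcong_refl qcong_mult_left p_integral_diff p_integral_mult) auto
  finally have S_cong: "qcong (int p) 1 S (2 * harm k - (2 * X + 1) / of_nat k + (2 * X - 1) * 0)" .
  have "((of_nat p * X + of_nat k - 1) gchoose (p - 1)) * ((- of_nat p * X - of_nat k - 1) gchoose (p - 1))
      = of_nat p ^ 2 * c * \<Pi>"
    using gbinomial_product_even_eq_prod[OF n(2) k(1) n(3), of "of_nat p * X"] n(1)
    unfolding n_def[symmetric] \<Pi>_def c_def by (simp add: field_simps power2_eq_square)
  also have "qcong (int p) (2 + 2) \<dots>
      (of_nat p ^ 2 * c * (1 + of_nat p * (2 * harm k - (2 * X + 1) / of_nat k + (2 * X - 1) * 0)))"
    by (rule qcong_near_one_scaled[OF prime c \<Pi>_cong S_cong])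
  also have "\<dots> = of_nat p ^ 2 * X * (X + 1) / of_nat k ^ 2 *
        (1 + 2 * of_nat p * harm k - of_nat p / of_nat k - 2 * of_nat p * X / of_nat k)"
    using k(1) by (simp add: c_def field_simps power2_eq_square)
  finally show ?thesis
    by (simp only: numeral_plus_numeral add_num_simps)
qed

lemma qcong_gbinomial_product_half:
  fixes X :: rat
  assumes p: "prime p" "p > 3" and k: "1 \<le> k" "k \<le> (p - 1) div 2" and X: "X \<in> p_integral (int p)"
  shows "qcong (int p) 3
     (((of_nat p * X + of_nat k - 1) gchoose ((p - 1) div 2))
       * ((- of_nat p * X - of_nat k - 1) gchoose ((p - 1) div 2)))
     (of_nat p * X / of_nat k *
        (1 - of_nat p * X / of_nat k + 2 * of_nat p * harm (2 * k) - of_nat p * harm k))"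
proof -
  have prime: "prime (int p)"
    using p(1) by simp
  note qcong_trans[OF prime, trans]
  define m where "m = (p - 1) div 2"
  have m: "p = 2 * m + 1" "k \<le> m"
    using p k prime_odd_nat[OF p(1)] unfolding m_def by auto
  define \<Pi> where "\<Pi> =
      ((\<Prod>i<k - 1. 1 + of_nat p * (X / of_nat (Suc i)))
        * (\<Prod>i<m - k. 1 + of_nat p * (X / of_nat (Suc (k + i)))))
    * ((\<Prod>i<m - k. 1 + of_nat p * (- X / of_nat (Suc i)))
        * (\<Prod>i<k. 1 + of_nat p * - ((X + 1) * (1 / of_nat (m - i)))))"
  define S where "S =
      ((\<Sum>i<k - 1. X / of_nat (Suc i)) + (\<Sum>i<m - k. X / of_nat (Suc (k + i))))
    + ((\<Sum>i<m - k. - X / of_nat (Suc i)) + (\<Sum>i<k. - ((X + 1) * (1 / of_nat (m - i)))))"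
  define c where "c = X / of_nat k"
  have c: "c \<in> p_integral (int p)"
    unfolding c_def using prime X k m by (intro p_integral_divide_of_nat) auto
  have \<Pi>_cong: "qcong (int p) 2 \<Pi> (1 + of_nat p * S)"
    unfolding \<Pi>_def S_def using m
    by (intro qcong_near_one_mult qcong_near_one_prod p_integral_add p_integral_uminus p_integral_sum
        p_integral_mult p_integral_divide_of_nat prime finite_lessThan X p_integral_1) auto
  define V where "V = (\<Sum>i<k. 1 / of_nat (m - i) :: rat)"
  have V_eq: "V = harm m - harm (m - k)"
    unfolding V_def by (rule sum_reciprocals_reversed[OF m(2)])
  have "S = - X / of_nat k + (2 * harm (2 * k) - harm k) + (-1) * (V + (2 * harm (2 * k) - harm k))"
    unfolding S_def sum_negf sum_distrib_left[symmetric] V_def[symmetric] sum_divide_Suc_eq_harm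
      sum_divide_Suc_add_eq_harm_diff[OF m(2)] harm_pred[OF k(1)[unfolded One_nat_def Suc_le_eq]]
    by (simp add: V_eq algebra_simps)
  also have "qcong (int p) 1 \<dots> (- X / of_nat k + (2 * harm (2 * k) - harm k) + (-1) * 0)"
    unfolding V_def using qcong_sum_reciprocals_reversed_harm[OF p(1) m] prime
    by (intro qcong_add qcong_refl qcong_mult_left) auto
  finally have S_cong: "qcong (int p) 1 S (- X / of_nat k + (2 * harm (2 * k) - harm k) + (-1) * 0)" .
  have "((of_nat p * X + of_nat k - 1) gchoose ((p - 1) div 2))
       * ((- of_nat p * X - of_nat k - 1) gchoose ((p - 1) div 2)) = of_nat p ^ 1 * c * \<Pi>"
    using gbinomial_product_eq_prod[OF k(1) m(2), of "of_nat p * X"]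
    unfolding m_def[symmetric] \<Pi>_def c_def m(1)[symmetric] by (simp add: field_simps)
  also have "qcong (int p) (1 + 2) \<dots>
      (of_nat p ^ 1 * c * (1 + of_nat p * (- X / of_nat k + (2 * harm (2 * k) - harm k) + (-1) * 0)))"
    by (rule qcong_near_one_scaled[OF prime c \<Pi>_cong S_cong])
  also have "\<dots> = of_nat p * X / of_nat k *
        (1 - of_nat p * X / of_nat k + 2 * of_nat p * harm (2 * k) - of_nat p * harm k)"
    by (simp add: c_def field_simps)
  finally show ?thesis
    by (simp only: one_plus_numeral add_num_simps)
qed

theorem lemma2p2:
  fixes p :: nat and t :: "nat \<Rightarrow> int"
  assumes "prime p" and "p > 3" and "t \<in> Zp (int p)"
  shows "(\<forall>k::nat. 1 \<le> k \<and> k \<le> p - 1 \<longrightarrow>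
           padic_cong (int p) 4
             (\<lambda>x. ((of_nat p * x + of_nat k - 1) gchoose (p - 1)) *
                  ((- of_nat p * x - of_nat k - 1) gchoose (p - 1)))
             (\<lambda>x. of_nat p ^ 2 * x * (x + 1) / of_nat k ^ 2 *
                  (1 + 2 * of_nat p * harm k - of_nat p / of_nat k - 2 * of_nat p * x / of_nat k))
             t)
       \<and> (\<forall>k::nat. 1 \<le> k \<and> k \<le> (p - 1) div 2 \<longrightarrow>
           padic_cong (int p) 3
             (\<lambda>x. ((of_nat p * x + of_nat k - 1) gchoose ((p - 1) div 2)) *
                  ((- of_nat p * x - of_nat k - 1) gchoose ((p - 1) div 2)))
             (\<lambda>x. of_nat p * x / of_nat k *
                  (1 - of_nat p * x / of_nat k + 2 * of_nat p * harm (2 * k) - of_nat p * harm k))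
             t)"
proof -
  have "of_int x \<in> p_integral (int p)" for x
    using assms(1) by simp
  then show ?thesis
    unfolding padic_cong_def
    using qcong_gbinomial_product_full[OF assms(1,2)] qcong_gbinomial_product_half[OF assms(1,2)]
    by auto
qed

end
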